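(* Let $G$ be a graph, let $s\in\mathbb{N}_{\geq 1}\cup\{\infty\}$ and let $k\in\mathbb{N}$. The following three statements are equivalent. (1) $\mathbf{cc}_s(G)\leq k$, i.e., there is a cop strategy $f$ on $G$ of cost at most $k$ such that for every robber strategy $R$ on $G$ the pair $(f,R)$ is cop-winning. (2) $G$ has no nonempty $(k+1,s)$-edge-hide-out. (3) $\delta^{s}_{\rm e}(G)\leq k$.
   Context: All graphs are finite, undirected, loopless, and may have parallel edges; $E(G)$ is the multiset of edges. For $s\in\mathbb{N}_{\geq1}\cup\{\infty\}$, an $s$-path is a path with at most $s$ edges (any path if $s=\infty$); a path of length $0$ from a vertex to itself is allowed. For $x\in V(G)$ and $S\subseteq V(G)\setminus\{x\}$, a set $A\subseteq E(G)$ is an $(s,x,S)$-edge-separator if every $s$-path of $G$ from $x$ to a vertex of $S$ contains an edge of $A$; $\mathbf{supp}_{G,s}(x,S)$ is the minimum size of such a separator (it is $0$ if $S=\emptyset$). For a layout (linear ordering) $L=\langle v_1,\dots,v_r\rangle$ of $V(G)$, the $s$-edge-support of $v_i$ is $\mathbf{supp}_{G,s}(v_i,\{v_1,\dots,v_{i-1}\})$; the $s$-edge-degeneracy of $L$ is the maximum $s$-edge-support of its vertices, and $\delta^{s}_{\rm e}(G)$ is the minimum of this over all layouts of $V(G)$. A $(k,s)$-edge-hide-out is a set $R\subseteq V(G)$ such that $\mathbf{supp}_{G,s}(x,R\setminus\{x\})\geq k$ for every $x\in R$. Search game: a cop strategy is a function $f:V(G)\to 2^{E(G)}$, with cost $\max_{v}|f(v)|$.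 A robber strategy is a pair $R=(v_{\rm start},g)$ with $v_{\rm start}\in V(G)$ and $g:2^{E(G)}\times V(G)\to V(G)$ such that for all $F,v$ there is an $s$-path from $v$ to $g(F,v)$ in $G\setminus F$ (so $g(F,v)=v$ is always allowed). The game scenario of $(f,R)$ is the sequence $v_0,F_1,v_1,F_2,v_2,\dots$ with $v_0=v_{\rm start}$, $F_i=f(v_{i-1})$, $v_i=g(F_i,v_{i-1})$; $(f,R)$ is cop-winning if $v_i=v_{i-1}$ for some $i\geq1$. $\mathbf{cc}_s(G)$ is the minimum $k$ such that some cop strategy of cost at most $k$ is cop-winning against every robber strategy. *)

theory Defs
  imports Main "HOL-Library.Extended_Nat"
begin

text \<open>A finite loopless multigraph: vertex set V, a finite set E of edge
 identifiers (so parallel edges are allowed), and an endpoint map ends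
 assigning to each edge a 2-element set of vertices.\<close>

definition multigraph :: "'v set \<Rightarrow> 'e set \<Rightarrow> ('e \<Rightarrow> 'v set) \<Rightarrow> bool" where
  "multigraph V E ends \<longleftrightarrow> finite V \<and> finite E \<and>
     (\<forall>e\<in>E. ends e \<subseteq> V \<and> card (ends e) = 2)"

text \<open>A path given by its vertex sequence xs and edge sequence es
 (edges taken from the edge set E, so E - F gives the graph G minus F).\<close>

definition is_path :: "'v set \<Rightarrow> 'e set \<Rightarrow> ('e \<Rightarrow> 'v set) \<Rightarrow> 'v list \<Rightarrow> 'e list \<Rightarrow> bool" where
  "is_path V E ends xs es \<longleftrightarrow> xs \<noteq> [] \<and> distinct xs \<and> set xs \<subseteq> V \<and>
     length xs = Suc (length es) \<and> set es \<subseteq> E \<and>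
     (\<forall>i<length es. ends (es ! i) = {xs ! i, xs ! Suc i})"

definition s_path_edges :: "'v set \<Rightarrow> 'e set \<Rightarrow> ('e \<Rightarrow> 'v set) \<Rightarrow> enat \<Rightarrow> 'v \<Rightarrow> 'v \<Rightarrow> 'e list \<Rightarrow> bool" where
  "s_path_edges V E ends s x y es \<longleftrightarrow>
     (\<exists>xs. is_path V E ends xs es \<and> hd xs = x \<and> last xs = y \<and> enat (length es) \<le> s)"

definition has_s_path :: "'v set \<Rightarrow> 'e set \<Rightarrow> ('e \<Rightarrow> 'v set) \<Rightarrow> enat \<Rightarrow> 'v \<Rightarrow> 'v \<Rightarrow> bool" where
  "has_s_path V E ends s x y \<longleftrightarrow> (\<exists>es. s_path_edges V E ends s x y es)"

definition edge_separator :: "'v set \<Rightarrow> 'e set \<Rightarrow> ('e \<Rightarrow> 'v set) \<Rightarrow> enat \<Rightarrow> 'v \<Rightarrow> 'v set \<Rightarrow> 'e set \<Rightarrow> bool" where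
  "edge_separator V E ends s x S A \<longleftrightarrow> A \<subseteq> E \<and>
     (\<forall>y\<in>S. \<forall>es. s_path_edges V E ends s x y es \<longrightarrow> set es \<inter> A \<noteq> {})"

definition supp :: "'v set \<Rightarrow> 'e set \<Rightarrow> ('e \<Rightarrow> 'v set) \<Rightarrow> enat \<Rightarrow> 'v \<Rightarrow> 'v set \<Rightarrow> nat" where
  "supp V E ends s x S = (LEAST n. \<exists>A. edge_separator V E ends s x S A \<and> card A = n)"

definition is_layout :: "'v set \<Rightarrow> 'v list \<Rightarrow> bool" where
  "is_layout V L \<longleftrightarrow> distinct L \<and> set L = V"

definition layout_support :: "'v set \<Rightarrow> 'e set \<Rightarrow> ('e \<Rightarrow> 'v set) \<Rightarrow> enat \<Rightarrow> 'v list \<Rightarrow> nat \<Rightarrow> nat" where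
  "layout_support V E ends s L i = supp V E ends s (L ! i) (set (take i L))"

definition layout_degeneracy :: "'v set \<Rightarrow> 'e set \<Rightarrow> ('e \<Rightarrow> 'v set) \<Rightarrow> enat \<Rightarrow> 'v list \<Rightarrow> nat" where
  "layout_degeneracy V E ends s L = Max (insert 0 {layout_support V E ends s L i | i. i < length L})"

definition edge_degeneracy :: "'v set \<Rightarrow> 'e set \<Rightarrow> ('e \<Rightarrow> 'v set) \<Rightarrow> enat \<Rightarrow> nat" where
  "edge_degeneracy V E ends s = Min {layout_degeneracy V E ends s L | L. is_layout V L}"

definition edge_hideout :: "'v set \<Rightarrow> 'e set \<Rightarrow> ('e \<Rightarrow> 'v set) \<Rightarrow> nat \<Rightarrow> enat \<Rightarrow> 'v set \<Rightarrow> bool" where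
  "edge_hideout V E ends k s R \<longleftrightarrow> R \<subseteq> V \<and> (\<forall>x\<in>R. supp V E ends s x (R - {x}) \<ge> k)"

definition cop_strategy :: "'v set \<Rightarrow> 'e set \<Rightarrow> ('v \<Rightarrow> 'e set) \<Rightarrow> bool" where
  "cop_strategy V E f \<longleftrightarrow> (\<forall>v\<in>V. f v \<subseteq> E)"

definition cop_cost :: "'v set \<Rightarrow> ('v \<Rightarrow> 'e set) \<Rightarrow> nat" where
  "cop_cost V f = Max (insert 0 ((\<lambda>v. card (f v)) ` V))"

definition robber_strategy :: "'v set \<Rightarrow> 'e set \<Rightarrow> ('e \<Rightarrow> 'v set) \<Rightarrow> enat \<Rightarrow> 'v \<Rightarrow> ('e set \<Rightarrow> 'v \<Rightarrow> 'v) \<Rightarrow> bool" where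
  "robber_strategy V E ends s v0 g \<longleftrightarrow> v0 \<in> V \<and>
     (\<forall>F. F \<subseteq> E \<longrightarrow> (\<forall>v\<in>V. has_s_path V (E - F) ends s v (g F v)))"

text \<open>Robber positions v_0, v_1, ... of the game scenario (F_i = f v_(i-1)).\<close>
fun robber_pos :: "('v \<Rightarrow> 'e set) \<Rightarrow> 'v \<Rightarrow> ('e set \<Rightarrow> 'v \<Rightarrow> 'v) \<Rightarrow> nat \<Rightarrow> 'v" where
  "robber_pos f v0 g 0 = v0"
| "robber_pos f v0 g (Suc i) = g (f (robber_pos f v0 g i)) (robber_pos f v0 g i)"

definition cop_winning :: "('v \<Rightarrow> 'e set) \<Rightarrow> 'v \<Rightarrow> ('e set \<Rightarrow> 'v \<Rightarrow> 'v) \<Rightarrow> bool" where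
  "cop_winning f v0 g \<longleftrightarrow> (\<exists>i. robber_pos f v0 g (Suc i) = robber_pos f v0 g i)"

definition winning_cop_strategy :: "'v set \<Rightarrow> 'e set \<Rightarrow> ('e \<Rightarrow> 'v set) \<Rightarrow> enat \<Rightarrow> ('v \<Rightarrow> 'e set) \<Rightarrow> bool" where
  "winning_cop_strategy V E ends s f \<longleftrightarrow> cop_strategy V E f \<and>
     (\<forall>v0 g. robber_strategy V E ends s v0 g \<longrightarrow> cop_winning f v0 g)"

definition cop_number :: "'v set \<Rightarrow> 'e set \<Rightarrow> ('e \<Rightarrow> 'v set) \<Rightarrow> enat \<Rightarrow> nat" where
  "cop_number V E ends s = (LEAST k. \<exists>f. winning_cop_strategy V E ends s f \<and> cop_cost V f \<le> k)"

end

theory Submission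
  imports Defs
begin

text \<open>
  If R is a nonempty (k+1)-hide-out, then whatever k edges the cops announce, the robber at
  x \<in> R can still reach another vertex of R, so he moves forever and cost k is not enough.
  If there is no such hide-out, every nonempty set of remaining vertices has a vertex of
  support at most k into the rest; peeling such vertices off from the right yields a layout
  of degeneracy at most k. Given such a layout, the cops standing at v block a minimum
  separator between v and the vertices before it, so the robber can only move to the right
  in the layout and must eventually stop.
\<close>

section \<open>Paths\<close>

lemma s_path_edges_Nil: "x \<in> V \<Longrightarrow> s_path_edges V E ends s x x []"
  unfolding s_path_edges_def is_path_def
  by (intro exI[of _ "[x]"]) (auto simp: zero_enat_def[symmetric])

lemma has_s_path_refl: "x \<in> V \<Longrightarrow> has_s_path V E ends s x x"
  unfolding has_s_path_def by (rule exI[of _ "[]"], erule s_path_edges_Nil)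

lemma s_path_edges_nonempty: "s_path_edges V E ends s x y es \<Longrightarrow> x \<noteq> y \<Longrightarrow> es \<noteq> []"
  unfolding s_path_edges_def is_path_def by (auto simp: length_Suc_conv)

lemma s_path_edges_subset: "s_path_edges V E ends s x y es \<Longrightarrow> set es \<subseteq> E"
  unfolding s_path_edges_def is_path_def by auto

lemma s_path_edges_target_in: "s_path_edges V E ends s x y es \<Longrightarrow> y \<in> V"
  unfolding s_path_edges_def is_path_def by auto

lemma has_s_path_target_in: "has_s_path V E ends s x y \<Longrightarrow> y \<in> V"
  unfolding has_s_path_def using s_path_edges_target_in by metis

lemma s_path_edges_Diff:
  "s_path_edges V (E - F) ends s x y es \<longleftrightarrow> s_path_edges V E ends s x y es \<and> set es \<inter> F = {}"
  unfolding s_path_edges_def is_path_def by auto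

section \<open>Edge separators and support\<close>

lemma edge_separator_all_edges: "x \<notin> S \<Longrightarrow> edge_separator V E ends s x S E"
  unfolding edge_separator_def
proof (intro conjI ballI allI impI)
  fix y es
  assume "x \<notin> S" "y \<in> S" "s_path_edges V E ends s x y es"
  then have "es \<noteq> []" "set es \<subseteq> E"
    using s_path_edges_nonempty s_path_edges_subset by metis+
  then show "set es \<inter> E \<noteq> {}"
    by (cases es) auto
qed simp

lemma supp_attained:
  assumes "x \<notin> S"
  obtains A where "edge_separator V E ends s x S A" "card A = supp V E ends s x S"
proof -
  have "\<exists>n A. edge_separator V E ends s x S A \<and> card A = n"
    using edge_separator_all_edges[OF assms] by blast
  from LeastI_ex[OF this] show ?thesis
    using that unfolding supp_def by blast
qed

lemma supp_le_card: "edge_separator V E ends s x S A \<Longrightarrow> supp V E ends s x S \<le> card A"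
  unfolding supp_def by (rule Least_le) blast

lemma has_s_path_avoiding_small:
  assumes "F \<subseteq> E" "card F < supp V E ends s x S"
  shows "\<exists>y\<in>S. has_s_path V (E - F) ends s x y"
proof -
  have "\<not> edge_separator V E ends s x S F"
    using supp_le_card assms(2) by fastforce
  then obtain y es where "y \<in> S" "s_path_edges V E ends s x y es" "set es \<inter> F = {}"
    using assms(1) unfolding edge_separator_def by blast
  then show ?thesis
    unfolding has_s_path_def s_path_edges_Diff by blast
qed

lemma hideout_escape:
  assumes "edge_hideout V E ends (Suc k) s R" "x \<in> R" "F \<subseteq> E" "card F \<le> k"
  shows "\<exists>y\<in>R - {x}. has_s_path V (E - F) ends s x y"
proof -
  have "Suc k \<le> supp V E ends s x (R - {x})"
    using assms(1,2) unfolding edge_hideout_def by blast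
  with assms(3,4) show ?thesis
    by (intro has_s_path_avoiding_small) auto
qed

section \<open>Layouts and degeneracy\<close>

lemma layout_degeneracy_le_iff:
  "layout_degeneracy V E ends s L \<le> k \<longleftrightarrow>
     (\<forall>i<length L. supp V E ends s (L ! i) (set (take i L)) \<le> k)"
  unfolding layout_degeneracy_def layout_support_def by (subst Max_le_iff) auto

lemma layout_degeneracy_snoc_le_iff:
  "layout_degeneracy V E ends s (L @ [x]) \<le> k \<longleftrightarrow>
     layout_degeneracy V E ends s L \<le> k \<and> supp V E ends s x (set L) \<le> k"
  unfolding layout_degeneracy_le_iff
  by (auto simp: nth_append less_Suc_eq)

lemma finite_layouts: "finite V \<Longrightarrow> finite {L. is_layout V L}"
  by (rule finite_subset[OF _ finite_lists_length_eq[of V "card V"]])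
     (auto simp: is_layout_def distinct_card)

lemma edge_degeneracy_le_iff:
  assumes "finite V"
  shows "edge_degeneracy V E ends s \<le> k \<longleftrightarrow>
           (\<exists>L. is_layout V L \<and> layout_degeneracy V E ends s L \<le> k)"
proof -
  let ?D = "{layout_degeneracy V E ends s L | L. is_layout V L}"
  have "finite ?D"
    using finite_layouts[OF assms] by (simp add: setcompr_eq_image)
  moreover have "?D \<noteq> {}"
    using finite_distinct_list[OF assms] unfolding is_layout_def by blast
  ultimately show ?thesis
    unfolding edge_degeneracy_def by (auto simp: Min_le_iff)
qed

lemma nth_in_set_take_iff:
  assumes "distinct L" "j < length L"
  shows "L ! j \<in> set (take i L) \<longleftrightarrow> j < i"
proof
  assume "L ! j \<in> set (take i L)"
  then obtain m where "m < i" "m < length L" "L ! m = L ! j"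
    by (auto simp: in_set_conv_nth)
  with assms show "j < i"
    using nth_eq_iff_index_eq by metis
next
  assume "j < i"
  with assms(2) show "L ! j \<in> set (take i L)"
    by (metis in_set_conv_nth length_take min_less_iff_conj nth_take)
qed

section \<open>The search game\<close>

lemma cop_cost_le_iff: "finite V \<Longrightarrow> cop_cost V f \<le> k \<longleftrightarrow> (\<forall>v\<in>V. card (f v) \<le> k)"
  unfolding cop_cost_def by (subst Max_le_iff) auto

lemma winning_cop_strategy_all_edges: "winning_cop_strategy V E ends s (\<lambda>_. E)"
  unfolding winning_cop_strategy_def cop_strategy_def
proof (intro conjI allI impI ballI)
  fix v0 g
  assume "robber_strategy V E ends s v0 g"
  then have "has_s_path V (E - E) ends s v0 (g E v0)"
    unfolding robber_strategy_def by blast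
  then obtain es where "s_path_edges V {} ends s v0 (g E v0) es"
    unfolding has_s_path_def by auto
  then have "g E v0 = v0"
    using s_path_edges_nonempty s_path_edges_subset by fastforce
  then show "cop_winning (\<lambda>_. E) v0 g"
    unfolding cop_winning_def by (intro exI[of _ 0]) simp
qed simp

lemma cop_number_le_iff:
  "cop_number V E ends s \<le> k \<longleftrightarrow> (\<exists>f. winning_cop_strategy V E ends s f \<and> cop_cost V f \<le> k)"
proof
  have "\<exists>n f. winning_cop_strategy V E ends s f \<and> cop_cost V f \<le> n"
    using winning_cop_strategy_all_edges by blast
  from LeastI_ex[OF this]
  show "cop_number V E ends s \<le> k \<Longrightarrow> \<exists>f. winning_cop_strategy V E ends s f \<and> cop_cost V f \<le> k"
    unfolding cop_number_def using le_trans by blast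
next
  show "\<exists>f. winning_cop_strategy V E ends s f \<and> cop_cost V f \<le> k \<Longrightarrow> cop_number V E ends s \<le> k"
    unfolding cop_number_def by (rule Least_le)
qed

lemma robber_pos_step:
  assumes "robber_strategy V E ends s v0 g" "cop_strategy V E f"
  shows "robber_pos f v0 g n \<in> V"
    and "has_s_path V (E - f (robber_pos f v0 g n)) ends s
           (robber_pos f v0 g n) (robber_pos f v0 g (Suc n))"
proof -
  have step: "v \<in> V \<Longrightarrow> has_s_path V (E - f v) ends s v (g (f v) v)" for v
    using assms unfolding robber_strategy_def cop_strategy_def by simp
  show pos: "robber_pos f v0 g n \<in> V"
  proof (induction n)
    case 0
    show ?case using assms(1) by (simp add: robber_strategy_def)
  next
    case (Suc n)
    show ?case using has_s_path_target_in[OF step[OF Suc]] by simp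
  qed
  show "has_s_path V (E - f (robber_pos f v0 g n)) ends s
          (robber_pos f v0 g n) (robber_pos f v0 g (Suc n))"
    using step[OF pos] by simp
qed

lemma cop_winning_if_rank_increases:
  fixes r :: "'v \<Rightarrow> nat"
  assumes increases: "\<And>n. robber_pos f v0 g (Suc n) \<noteq> robber_pos f v0 g n \<Longrightarrow>
                        r (robber_pos f v0 g n) < r (robber_pos f v0 g (Suc n))"
    and bounded: "\<And>n. r (robber_pos f v0 g n) < b"
  shows "cop_winning f v0 g"
proof (rule ccontr)
  assume "\<not> cop_winning f v0 g"
  then have grows: "r (robber_pos f v0 g n) < r (robber_pos f v0 g (Suc n))" for n
    using increases unfolding cop_winning_def by blast
  have below: "n \<le> r (robber_pos f v0 g n)" for n
  proof (induction n)
    case (Suc n)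
    then show ?case using grows[of n] by linarith
  qed simp
  show False
    using below[of b] bounded[of b] by linarith
qed

lemma hideout_defeats_cop_strategy:
  assumes "R \<noteq> {}" "edge_hideout V E ends (Suc k) s R"
    and f: "cop_strategy V E f" "\<forall>v\<in>V. card (f v) \<le> k"
  shows "\<exists>v0 g. robber_strategy V E ends s v0 g \<and> \<not> cop_winning f v0 g"
proof -
  have RV: "R \<subseteq> V"
    using assms(2) unfolding edge_hideout_def by blast
  obtain v0 where v0: "v0 \<in> R"
    using assms(1) by blast
  define g where "g F v =
      (if \<exists>y\<in>R - {v}. has_s_path V (E - F) ends s v y
       then SOME y. y \<in> R - {v} \<and> has_s_path V (E - F) ends s v y else v)" for F v
  have g_path: "has_s_path V (E - F) ends s v (g F v)" if "v \<in> V" for v F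
  proof (cases "\<exists>y\<in>R - {v}. has_s_path V (E - F) ends s v y")
    case True
    then have "\<exists>y. y \<in> R - {v} \<and> has_s_path V (E - F) ends s v y" by blast
    from someI_ex[OF this] show ?thesis by (simp add: g_def True)
  next
    case False
    then show ?thesis using has_s_path_refl[OF that] by (simp add: g_def)
  qed
  have g_escapes: "g F v \<in> R - {v}" if "v \<in> R" "F \<subseteq> E" "card F \<le> k" for v F
  proof -
    have escape: "\<exists>y\<in>R - {v}. has_s_path V (E - F) ends s v y"
      using hideout_escape[OF assms(2) that] .
    then have "\<exists>y. y \<in> R - {v} \<and> has_s_path V (E - F) ends s v y" by blast
    from someI_ex[OF this] show ?thesis by (simp add: g_def escape)
  qed
  have robber: "robber_strategy V E ends s v0 g"
    unfolding robber_strategy_def using v0 RV g_path by blast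
  have step: "robber_pos f v0 g (Suc n) \<in> R - {robber_pos f v0 g n}"
    if "robber_pos f v0 g n \<in> R" for n
    using g_escapes[OF that] f that RV unfolding cop_strategy_def by auto
  have in_R: "robber_pos f v0 g n \<in> R" for n
    using v0 step by (induction n) auto
  have "robber_pos f v0 g (Suc n) \<noteq> robber_pos f v0 g n" for n
    using step[OF in_R] by blast
  then show ?thesis
    using robber unfolding cop_winning_def by blast
qed

lemma cop_number_le_imp_no_hideout:
  assumes "finite V" "cop_number V E ends s \<le> k"
  shows "\<not> (\<exists>R. R \<noteq> {} \<and> edge_hideout V E ends (k + 1) s R)"
proof
  obtain f where f: "winning_cop_strategy V E ends s f" "cop_cost V f \<le> k"
    using assms(2) cop_number_le_iff by blast
  then have "cop_strategy V E f" "\<forall>v\<in>V. card (f v) \<le> k"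
    unfolding winning_cop_strategy_def cop_cost_le_iff[OF assms(1)] by blast+
  moreover assume "\<exists>R. R \<noteq> {} \<and> edge_hideout V E ends (k + 1) s R"
  ultimately obtain v0 g where "robber_strategy V E ends s v0 g" "\<not> cop_winning f v0 g"
    using hideout_defeats_cop_strategy by (metis Suc_eq_plus1)
  then show False
    using f(1) unfolding winning_cop_strategy_def by blast
qed

lemma no_hideout_imp_layout:
  assumes no_hideout: "\<not> (\<exists>R. R \<noteq> {} \<and> edge_hideout V E ends (k + 1) s R)"
    and "finite R" "R \<subseteq> V"
  shows "\<exists>L. distinct L \<and> set L = R \<and> layout_degeneracy V E ends s L \<le> k"
  using assms(2,3)
proof (induction "card R" arbitrary: R)
  case 0
  then show ?case
    by (intro exI[of _ "[]"]) (simp add: layout_degeneracy_le_iff)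
next
  case (Suc n)
  have "R \<noteq> {}"
    using Suc.hyps(2) by auto
  then have "\<not> edge_hideout V E ends (k + 1) s R"
    using no_hideout by blast
  then obtain x where x: "x \<in> R" "supp V E ends s x (R - {x}) \<le> k"
    using Suc.prems(2) unfolding edge_hideout_def by force
  have "n = card (R - {x})"
    using Suc.hyps(2) x(1) Suc.prems(1) by simp
  then obtain L where "distinct L" "set L = R - {x}" "layout_degeneracy V E ends s L \<le> k"
    using Suc.hyps(1)[of "R - {x}"] Suc.prems by blast
  then show ?case
    using x by (intro exI[of _ "L @ [x]"]) (auto simp: layout_degeneracy_snoc_le_iff)
qed

lemma no_hideout_imp_edge_degeneracy_le:
  assumes "finite V" "\<not> (\<exists>R. R \<noteq> {} \<and> edge_hideout V E ends (k + 1) s R)"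
  shows "edge_degeneracy V E ends s \<le> k"
proof -
  obtain L where "distinct L" "set L = V" "layout_degeneracy V E ends s L \<le> k"
    using no_hideout_imp_layout[OF assms(2) assms(1) subset_refl] by blast
  then show ?thesis
    unfolding edge_degeneracy_le_iff[OF assms(1)] is_layout_def by blast
qed

lemma winning_cop_strategy_of_layout:
  assumes "is_layout V L"
  shows "\<exists>f. winning_cop_strategy V E ends s f \<and> cop_cost V f \<le> layout_degeneracy V E ends s L"
proof -
  have L: "distinct L" "set L = V"
    using assms unfolding is_layout_def by auto
  have inj: "inj_on ((!) L) {..<length L}" and img: "(!) L ` {..<length L} = V"
    using bij_betw_nth[OF L(1) refl L(2)[symmetric]] unfolding bij_betw_def by blast+
  define pos where "pos = the_inv_into {..<length L} ((!) L)"
  have pos: "pos v < length L" "L ! pos v = v" if "v \<in> V" for v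
  proof -
    show "pos v < length L"
      using the_inv_into_into[OF inj, of v] that img unfolding pos_def by blast
    show "L ! pos v = v"
      using f_the_inv_into_f[OF inj, of v] that img unfolding pos_def by blast
  qed
  define before where "before v = set (take (pos v) L)" for v
  have before_iff: "u \<in> before v \<longleftrightarrow> pos u < pos v" if "u \<in> V" for u v
    using nth_in_set_take_iff[OF L(1) pos(1)[OF that]] pos(2)[OF that] by (simp add: before_def)
  define f where "f v = (SOME A. edge_separator V E ends s v (before v) A
                                \<and> card A = supp V E ends s v (before v))" for v
  have f_sep: "edge_separator V E ends s v (before v) (f v)"
    and f_card: "card (f v) = supp V E ends s v (before v)" if "v \<in> V" for v
  proof -
    have "v \<notin> before v"
      using before_iff[OF that] by simp
    then have "\<exists>A. edge_separator V E ends s v (before v) A \<and> card A = supp V E ends s v (before v)"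
      by (rule supp_attained) blast
    from someI_ex[OF this]
    show "edge_separator V E ends s v (before v) (f v)" "card (f v) = supp V E ends s v (before v)"
      unfolding f_def by blast+
  qed
  have strategy: "cop_strategy V E f"
    using f_sep unfolding cop_strategy_def edge_separator_def by blast
  have "cop_cost V f \<le> layout_degeneracy V E ends s L"
  proof -
    have supp_le: "\<forall>i<length L. supp V E ends s (L ! i) (set (take i L)) \<le> layout_degeneracy V E ends s L"
      using layout_degeneracy_le_iff by blast
    have "card (f v) \<le> layout_degeneracy V E ends s L" if "v \<in> V" for v
      using supp_le pos[OF that] f_card[OF that] unfolding before_def by metis
    moreover have "finite V"
      using L(2) finite_set by metis
    ultimately show ?thesis
      by (simp add: cop_cost_le_iff)
  qed
  moreover have "cop_winning f v0 g" if robber: "robber_strategy V E ends s v0 g" for v0 g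
  proof (rule cop_winning_if_rank_increases[where r = pos and b = "length L"])
    note in_V = robber_pos_step(1)[OF robber strategy]
      and step = robber_pos_step(2)[OF robber strategy]
    fix n
    let ?u = "robber_pos f v0 g n" and ?w = "robber_pos f v0 g (Suc n)"
    show "pos ?u < length L"
      using pos(1)[OF in_V] .
    assume moved: "?w \<noteq> ?u"
    obtain es where "s_path_edges V E ends s ?u ?w es" "set es \<inter> f ?u = {}"
      using step[of n] unfolding has_s_path_def s_path_edges_Diff by blast
    then have "?w \<notin> before ?u"
      using f_sep[OF in_V] unfolding edge_separator_def by blast
    moreover have "pos ?w \<noteq> pos ?u"
      using moved pos(2)[OF in_V[of n]] pos(2)[OF in_V[of "Suc n"]] by metis
    ultimately show "pos ?u < pos ?w"
      using before_iff[OF in_V[of "Suc n"]] by simp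
  qed
  ultimately show ?thesis
    using strategy unfolding winning_cop_strategy_def by blast
qed

lemma edge_degeneracy_le_imp_cop_number_le:
  assumes "finite V" "edge_degeneracy V E ends s \<le> k"
  shows "cop_number V E ends s \<le> k"
proof -
  obtain L where "is_layout V L" "layout_degeneracy V E ends s L \<le> k"
    using assms edge_degeneracy_le_iff by blast
  then obtain f where "winning_cop_strategy V E ends s f" "cop_cost V f \<le> k"
    using winning_cop_strategy_of_layout order_trans by blast
  then show ?thesis
    using cop_number_le_iff by blast
qed

theorem mainTheorem1:
  fixes V :: "'v set" and E :: "'e set" and ends :: "'e \<Rightarrow> 'v set"
    and s :: enat and k :: nat
  assumes "multigraph V E ends" and "s \<ge> 1"
  shows "(cop_number V E ends s \<le> k \<longleftrightarrow>
            \<not> (\<exists>R. R \<noteq> {} \<and> edge_hideout V E ends (k + 1) s R))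
       \<and> (\<not> (\<exists>R. R \<noteq> {} \<and> edge_hideout V E ends (k + 1) s R) \<longleftrightarrow>
            edge_degeneracy V E ends s \<le> k)"
proof -
  have "finite V"
    using assms(1) unfolding multigraph_def by blast
  note to_no_hideout = cop_number_le_imp_no_hideout[OF this, of E ends s k]
    and to_degeneracy = no_hideout_imp_edge_degeneracy_le[OF this, of E ends k s]
    and to_cop_number = edge_degeneracy_le_imp_cop_number_le[OF this, of E ends s k]
  show ?thesis
    using to_no_hideout to_degeneracy to_cop_number by blast
qed

end
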